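(* Let $\boldsymbol\xi=(\xi_1,\dots,\xi_n)$ be the indicator vector of the output of binary-tree pivotal sampling on a fixed full binary tree with leaves $[n]$ and leaf probabilities with integer sum. For every $\mathcal S\subseteq[n]$ with $\Pr[\xi_l=1\ \forall l\in\mathcal S]>0$ and all distinct $i,j\in[n]\setminus\mathcal S$, $$\Pr[\xi_i=1\mid \xi_l=1\ \forall l\in\mathcal S]\;\Pr[\xi_j=1\mid \xi_l=1\ \forall l\in\mathcal S]\;\ge\;\Pr[\xi_i=1,\ \xi_j=1\mid \xi_l=1\ \forall l\in\mathcal S].$$
   Context: Binary-tree pivotal sampling: let $T$ be a full binary tree whose leaves are identified with an index set, and let $q_i\in[0,1]$ be leaf probabilities with integer sum. Each node can store an index together with a current probability; initially each leaf $i$ stores $i$ with probability $q_i$, and the output set $\mathcal S_{\rm out}$ is empty. Repeatedly choose two sibling nodes that both store indices, say $i$ with probability $q_i$ and $j$ with probability $q_j$, with parent $P$, and remove them. If $q_i+q_j\le1$: with probability $q_i/(q_i+q_j)$ store $i$ at $P$ with probability $q_i+q_j$ ($j$ is rejected), otherwise store $j$ at $P$ with probability $q_i+q_j$ ($i$ is rejected). If $q_i+q_j>1$: with probability $(1-q_i)/(2-q_i-q_j)$ put $j$ into $\mathcal S_{\rm out}$ and store $i$ at $P$ with probability $q_i+q_j-1$; otherwise put $i$ into $\mathcal S_{\rm out}$ and store $j$ at $P$ with probability $q_i+q_j-1$. When only the root stores an index, put it into $\mathcal S_{\rm out}$ iff its probability is $1$. *)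

theory Defs
  imports "HOL-Probability.Probability"
begin

datatype btree = Leaf nat | Node btree btree

fun leaves :: "btree \<Rightarrow> nat list" where
  "leaves (Leaf i) = [i]"
| "leaves (Node l r) = leaves l @ leaves r"

text \<open>One pivotal merge of two sibling nodes storing index i with probability a and
  index j with probability b; S is the output set accumulated so far.\<close>
definition merge_step :: "nat set \<Rightarrow> nat \<Rightarrow> real \<Rightarrow> nat \<Rightarrow> real \<Rightarrow> (nat set \<times> (nat \<times> real)) pmf" where
  "merge_step S i a j b =
     (if a + b \<le> 1 then
        map_pmf (\<lambda>c. if c then (S, (i, a + b)) else (S, (j, a + b)))
                (bernoulli_pmf (a / (a + b)))
      else
        map_pmf (\<lambda>c. if c then (insert j S, (i, a + b - 1)) else (insert i S, (j, a + b - 1)))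
                (bernoulli_pmf ((1 - a) / (2 - a - b))))"

text \<open>Processing a subtree bottom-up: distribution of (outputs so far, what its root stores).
  Merges in disjoint subtrees are independent, so this fixed order yields the
  distribution of the procedure.\<close>
fun pivot :: "(nat \<Rightarrow> real) \<Rightarrow> btree \<Rightarrow> (nat set \<times> (nat \<times> real)) pmf" where
  "pivot q (Leaf i) = return_pmf ({}, (i, q i))"
| "pivot q (Node l r) =
     bind_pmf (pivot q l) (\<lambda>(S1, i, a).
       bind_pmf (pivot q r) (\<lambda>(S2, j, b). merge_step (S1 \<union> S2) i a j b))"

definition pivotal_sampling :: "(nat \<Rightarrow> real) \<Rightarrow> btree \<Rightarrow> nat set pmf" where
  "pivotal_sampling q t = map_pmf (\<lambda>(S, i, a). if a = 1 then insert i S else S) (pivot q t)"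

end

theory Submission
  imports Defs
begin

text \<open>
  For a subtree, let \<alpha>(X) be the probability that X lies in the output produced so far, and
  \<gamma>(X) the probability that X lies in that output together with the index stored at the root
  of the subtree. By induction on the tree, \<alpha> and \<gamma> are nonnegative,
  \<alpha>(B \<union> {i}) \<gamma>(B) \<le> \<alpha>(B) \<gamma>(B \<union> {i}), and every combination h = a\<alpha> + b\<gamma> with a, b \<ge> 0
  satisfies h(B \<union> {i, j}) h(B) \<le> h(B \<union> {i}) h(B \<union> {j}). A merge writes the new pair
  bilinearly in the pairs of the two children, evaluated at X \<inter> L and X - L for the leaf set L
  of the left child, with nonnegative coefficients. For i, j on the same side the inequality is
  that of the corresponding child; for i, j on different sides it is the product of the two
  children's ratio inequalities and the inequality c00 c11 \<le> c01 c10 between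
  the merge coefficients. At the root the probability that X is contained in the sample is
  \<alpha>(X) or \<gamma>(X), and conditioning on S turns the inequality into the claim.
\<close>

lemma measure_bind_pmf:
  "measure_pmf.prob (bind_pmf M F) E = (\<integral>x. measure_pmf.prob (F x) E \<partial>M)"
  unfolding measure_pmf_bind
  by (rule measure_pmf.measure_bind[where N="count_space UNIV"])
     (auto simp: space_subprob_algebra intro: prob_space_imp_subprob_space measure_pmf.prob_space_axioms)

lemma measure_bind_pmf_bool:
  fixes M :: "bool pmf" and F :: "bool \<Rightarrow> 'a pmf"
  shows "measure_pmf.prob (bind_pmf M F) E
     = pmf M True * measure_pmf.prob (F True) E + (1 - pmf M True) * measure_pmf.prob (F False) E"
proof -
  have "measure_pmf.prob (bind_pmf M F) E = (\<Sum>c\<in>UNIV. measure_pmf.prob (F c) E * pmf M c)"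
    unfolding measure_bind_pmf by (rule integral_measure_pmf_real) auto
  then show ?thesis by (simp add: UNIV_bool pmf_False_conv_True)
qed

lemma measure_bind_map_pmf_bool:
  fixes M :: "bool pmf"
  shows "measure_pmf.prob (bind_pmf N (\<lambda>z. map_pmf (h z) M)) E
     = pmf M True * measure_pmf.prob N {z. h z True \<in> E} + (1 - pmf M True) * measure_pmf.prob N {z. h z False \<in> E}"
proof -
  have "bind_pmf N (\<lambda>z. map_pmf (h z) M) = bind_pmf M (\<lambda>c. map_pmf (\<lambda>z. h z c) N)"
    unfolding map_pmf_def by (rule bind_commute_pmf)
  then show ?thesis by (simp add: measure_bind_pmf_bool vimage_def)
qed

lemma measure_pair_pmf_subset_Un:
  assumes "\<And>x. x \<in> set_pmf M \<Longrightarrow> P x \<subseteq> A" and "\<And>y. y \<in> set_pmf N \<Longrightarrow> Q y \<inter> A = {}"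
  shows "measure_pmf.prob (pair_pmf M N) {z. X \<subseteq> P (fst z) \<union> Q (snd z)}
     = measure_pmf.prob M {x. X \<inter> A \<subseteq> P x} * measure_pmf.prob N {y. X - A \<subseteq> Q y}"
proof -
  have split: "X \<subseteq> P x \<union> Q y \<longleftrightarrow> X \<inter> A \<subseteq> P x \<and> X - A \<subseteq> Q y"
    if "x \<in> set_pmf M" "y \<in> set_pmf N" for x y
    using assms(1)[OF that(1)] assms(2)[OF that(2)] by blast
  have "{z. X \<subseteq> P (fst z) \<union> Q (snd z)} \<inter> set_pmf (pair_pmf M N)
     = ({x. X \<inter> A \<subseteq> P x} \<inter> set_pmf M) \<times> ({y. X - A \<subseteq> Q y} \<inter> set_pmf N)"
  proof (rule set_eqI)
    fix z
    show "z \<in> {z. X \<subseteq> P (fst z) \<union> Q (snd z)} \<inter> set_pmf (pair_pmf M N)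
      \<longleftrightarrow> z \<in> ({x. X \<inter> A \<subseteq> P x} \<inter> set_pmf M) \<times> ({y. X - A \<subseteq> Q y} \<inter> set_pmf N)"
      using split[of "fst z" "snd z"]
      by (cases z) (auto simp only: set_pair_pmf mem_Times_iff Int_iff mem_Collect_eq fst_conv snd_conv)
  qed
  then have "measure_pmf.prob (pair_pmf M N) ({z. X \<subseteq> P (fst z) \<union> Q (snd z)} \<inter> set_pmf (pair_pmf M N))
     = measure_pmf.prob M ({x. X \<inter> A \<subseteq> P x} \<inter> set_pmf M) * measure_pmf.prob N ({y. X - A \<subseteq> Q y} \<inter> set_pmf N)"
    by (simp add: measure_pmf_prob_product countable_Int2)
  then show ?thesis
    unfolding measure_Int_set_pmf .
qed

section \<open>Negatively correlated set functions\<close>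

definition neg_corr :: "('a set \<Rightarrow> real) \<Rightarrow> bool" where
  "neg_corr h \<longleftrightarrow>
     (\<forall>B i j. i \<noteq> j \<longrightarrow> h (insert i (insert j B)) * h B \<le> h (insert i B) * h (insert j B))"

definition ratio_antimono :: "('a set \<Rightarrow> real) \<Rightarrow> ('a set \<Rightarrow> real) \<Rightarrow> bool" where
  "ratio_antimono f g \<longleftrightarrow> (\<forall>B i. f (insert i B) * g B \<le> f B * g (insert i B))"

definition neg_corr_pair :: "('a set \<Rightarrow> real) \<Rightarrow> ('a set \<Rightarrow> real) \<Rightarrow> bool" where
  "neg_corr_pair f g \<longleftrightarrow> (\<forall>X. 0 \<le> f X \<and> 0 \<le> g X) \<and> ratio_antimono f g
     \<and> (\<forall>a b. 0 \<le> a \<longrightarrow> 0 \<le> b \<longrightarrow> neg_corr (\<lambda>X. a * f X + b * g X))"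

lemma neg_corr_pairD:
  assumes "neg_corr_pair f g"
  shows "neg_corr f" "neg_corr g"
proof -
  have "\<forall>a\<ge>0. \<forall>b\<ge>0. neg_corr (\<lambda>X. a * f X + b * g X)"
    using assms unfolding neg_corr_pair_def by blast
  from this[rule_format, of 1 0] this[rule_format, of 0 1]
  show "neg_corr f" "neg_corr g" by simp_all
qed

lemma ratio_ineq_lincomb:
  fixes m0 m1 n0 n1 x0 x1 y0 y1 :: real
  assumes "m1 * n0 \<le> m0 * n1" "x1 * y0 \<le> x0 * y1"
  shows "(m0 * x1 + m1 * y1) * (n0 * x0 + n1 * y0) \<le> (m0 * x0 + m1 * y0) * (n0 * x1 + n1 * y1)"
proof -
  have "(m0 * x0 + m1 * y0) * (n0 * x1 + n1 * y1) - (m0 * x1 + m1 * y1) * (n0 * x0 + n1 * y0)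
      = (x0 * y1 - x1 * y0) * (m0 * n1 - m1 * n0)"
    by algebra
  moreover have "0 \<le> (x0 * y1 - x1 * y0) * (m0 * n1 - m1 * n0)"
    using assms by simp
  ultimately show ?thesis by linarith
qed

lemma cross_ineq_bilinear:
  fixes e00 e01 e10 e11 x0 x1 y0 y1 u0 u1 w0 w1 :: real
  assumes "e00 * e11 \<le> e01 * e10" "x1 * y0 \<le> x0 * y1" "u1 * w0 \<le> u0 * w1"
  shows "(e00*x1*u1 + e01*x1*w1 + e10*y1*u1 + e11*y1*w1) * (e00*x0*u0 + e01*x0*w0 + e10*y0*u0 + e11*y0*w0)
       \<le> (e00*x1*u0 + e01*x1*w0 + e10*y1*u0 + e11*y1*w0) * (e00*x0*u1 + e01*x0*w1 + e10*y0*u1 + e11*y0*w1)"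
proof -
  have "(e00*x1*u0 + e01*x1*w0 + e10*y1*u0 + e11*y1*w0) * (e00*x0*u1 + e01*x0*w1 + e10*y0*u1 + e11*y0*w1)
     - (e00*x1*u1 + e01*x1*w1 + e10*y1*u1 + e11*y1*w1) * (e00*x0*u0 + e01*x0*w0 + e10*y0*u0 + e11*y0*w0)
     = (e01*e10 - e00*e11) * ((x0*y1 - x1*y0) * (u0*w1 - u1*w0))"
    by algebra
  moreover have "0 \<le> (e01*e10 - e00*e11) * ((x0*y1 - x1*y0) * (u0*w1 - u1*w0))"
    using assms by simp
  ultimately show ?thesis by linarith
qed

definition split_comb ::
  "'a set \<Rightarrow> real \<Rightarrow> real \<Rightarrow> real \<Rightarrow> real \<Rightarrow> ('a set \<Rightarrow> real) \<Rightarrow> ('a set \<Rightarrow> real)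
     \<Rightarrow> ('a set \<Rightarrow> real) \<Rightarrow> ('a set \<Rightarrow> real) \<Rightarrow> 'a set \<Rightarrow> real" where
  "split_comb A c00 c01 c10 c11 f1 g1 f2 g2 X =
     c00 * f1 (X \<inter> A) * f2 (X - A) + c01 * f1 (X \<inter> A) * g2 (X - A)
   + c10 * g1 (X \<inter> A) * f2 (X - A) + c11 * g1 (X \<inter> A) * g2 (X - A)"

lemma split_comb_swap:
  "split_comb (- A) c00 c10 c01 c11 f2 g2 f1 g1 = split_comb A c00 c01 c10 c11 f1 g1 f2 g2"
  by (auto simp: split_comb_def Diff_eq algebra_simps)

lemma split_comb_fix_right:
  assumes "X - A = B - A"
  shows "split_comb A c00 c01 c10 c11 f1 g1 f2 g2 X
     = (c00 * f2 (B - A) + c01 * g2 (B - A)) * f1 (X \<inter> A) + (c10 * f2 (B - A) + c11 * g2 (B - A)) * g1 (X \<inter> A)"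
  using assms by (simp add: split_comb_def algebra_simps)

lemma split_comb_lincomb:
  "a * split_comb A c00 c01 c10 c11 f1 g1 f2 g2 X + b * split_comb A d00 d01 d10 d11 f1 g1 f2 g2 X
   = split_comb A (a * c00 + b * d00) (a * c01 + b * d01) (a * c10 + b * d10) (a * c11 + b * d11) f1 g1 f2 g2 X"
  by (simp add: split_comb_def algebra_simps)

lemma split_comb_nonneg:
  assumes "\<And>X. 0 \<le> f1 X \<and> 0 \<le> g1 X" "\<And>X. 0 \<le> f2 X \<and> 0 \<le> g2 X"
    and "0 \<le> c00" "0 \<le> c01" "0 \<le> c10" "0 \<le> c11"
  shows "0 \<le> split_comb A c00 c01 c10 c11 f1 g1 f2 g2 X"
  using assms by (simp add: split_comb_def)

lemma split_comb_neg_corr_same_side: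
  assumes "neg_corr_pair f1 g1" "\<And>X. 0 \<le> f2 X \<and> 0 \<le> g2 X"
    and "0 \<le> c00" "0 \<le> c01" "0 \<le> c10" "0 \<le> c11"
    and "i \<in> A" "j \<in> A" "i \<noteq> j"
  defines "h \<equiv> split_comb A c00 c01 c10 c11 f1 g1 f2 g2"
  shows "h (insert i (insert j B)) * h B \<le> h (insert i B) * h (insert j B)"
proof -
  define m where "m = c00 * f2 (B - A) + c01 * g2 (B - A)"
  define n where "n = c10 * f2 (B - A) + c11 * g2 (B - A)"
  have "0 \<le> m" "0 \<le> n"
    using assms(2-6) by (simp_all add: m_def n_def)
  then have "neg_corr (\<lambda>Y. m * f1 Y + n * g1 Y)"
    using assms(1) unfolding neg_corr_pair_def by blast
  moreover have "h X = m * f1 (X \<inter> A) + n * g1 (X \<inter> A)" if "X - A = B - A" for X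
    unfolding h_def m_def n_def by (rule split_comb_fix_right[OF that])
  moreover have "insert i (insert j B) \<inter> A = insert i (insert j (B \<inter> A))"
    "insert i B \<inter> A = insert i (B \<inter> A)" "insert j B \<inter> A = insert j (B \<inter> A)"
    "insert i (insert j B) - A = B - A" "insert i B - A = B - A" "insert j B - A = B - A"
    using assms(7,8) by auto
  ultimately show ?thesis
    using assms(9) unfolding neg_corr_def by simp
qed

lemma split_comb_neg_corr_cross:
  assumes "ratio_antimono f1 g1" "ratio_antimono f2 g2" "c00 * c11 \<le> c01 * c10"
    and "i \<in> A" "j \<notin> A"
  defines "h \<equiv> split_comb A c00 c01 c10 c11 f1 g1 f2 g2"
  shows "h (insert i (insert j B)) * h B \<le> h (insert i B) * h (insert j B)"
proof -
  have "insert i (insert j B) \<inter> A = insert i (B \<inter> A)" "insert i (insert j B) - A = insert j (B - A)"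
    "insert i B \<inter> A = insert i (B \<inter> A)" "insert i B - A = B - A"
    "insert j B \<inter> A = B \<inter> A" "insert j B - A = insert j (B - A)"
    using assms(4,5) by auto
  moreover have "f1 (insert i (B \<inter> A)) * g1 (B \<inter> A) \<le> f1 (B \<inter> A) * g1 (insert i (B \<inter> A))"
    "f2 (insert j (B - A)) * g2 (B - A) \<le> f2 (B - A) * g2 (insert j (B - A))"
    using assms(1,2) unfolding ratio_antimono_def by blast+
  ultimately show ?thesis
    unfolding h_def split_comb_def using cross_ineq_bilinear[OF assms(3)] by simp
qed

lemma neg_corr_split_comb:
  assumes "neg_corr_pair f1 g1" "neg_corr_pair f2 g2"
    and "0 \<le> c00" "0 \<le> c01" "0 \<le> c10" "0 \<le> c11" "c00 * c11 \<le> c01 * c10"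
  shows "neg_corr (split_comb A c00 c01 c10 c11 f1 g1 f2 g2)"
  unfolding neg_corr_def
proof (intro allI impI)
  fix B i j assume "i \<noteq> (j :: 'a)"
  let ?h = "split_comb A c00 c01 c10 c11 f1 g1 f2 g2"
  have ratio: "ratio_antimono f1 g1" "ratio_antimono f2 g2"
    and nonneg: "\<And>X. 0 \<le> f1 X \<and> 0 \<le> g1 X" "\<And>X. 0 \<le> f2 X \<and> 0 \<le> g2 X"
    using assms(1,2) unfolding neg_corr_pair_def by blast+
  show "?h (insert i (insert j B)) * ?h B \<le> ?h (insert i B) * ?h (insert j B)"
  proof (cases "i \<in> A"; cases "j \<in> A")
    assume "i \<in> A" "j \<in> A"
    from split_comb_neg_corr_same_side[OF assms(1) nonneg(2) assms(3-6) this \<open>i \<noteq> j\<close>]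
    show ?thesis .
  next
    assume "i \<in> A" "j \<notin> A"
    from split_comb_neg_corr_cross[OF ratio assms(7) this]
    show ?thesis .
  next
    assume "i \<notin> A" "j \<in> A"
    from split_comb_neg_corr_cross[OF ratio assms(7) this(2,1)]
    show ?thesis by (simp add: insert_commute mult.commute)
  next
    assume "i \<notin> A" "j \<notin> A"
    then have "i \<in> - A" "j \<in> - A" by simp_all
    from split_comb_neg_corr_same_side[OF assms(2) nonneg(1) assms(3,5,4,6) this \<open>i \<noteq> j\<close>]
    show ?thesis by (simp only: split_comb_swap)
  qed
qed

lemma split_comb_ratio_left:
  assumes "ratio_antimono f1 g1" "\<And>X. 0 \<le> f2 X \<and> 0 \<le> g2 X" "i \<in> A"
    and "\<And>u v. 0 \<le> u \<Longrightarrow> 0 \<le> v \<Longrightarrow>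
      (c10 * u + c11 * v) * (d00 * u + d01 * v) \<le> (c00 * u + c01 * v) * (d10 * u + d11 * v)"
  defines "F \<equiv> split_comb A c00 c01 c10 c11 f1 g1 f2 g2"
    and "G \<equiv> split_comb A d00 d01 d10 d11 f1 g1 f2 g2"
  shows "F (insert i B) * G B \<le> F B * G (insert i B)"
proof -
  define u where "u = f2 (B - A)"
  define v where "v = g2 (B - A)"
  have "0 \<le> u" "0 \<le> v"
    using assms(2) by (simp_all add: u_def v_def)
  then have "(c10 * u + c11 * v) * (d00 * u + d01 * v) \<le> (c00 * u + c01 * v) * (d10 * u + d11 * v)"
    by (rule assms(4))
  moreover have "F X = (c00 * u + c01 * v) * f1 (X \<inter> A) + (c10 * u + c11 * v) * g1 (X \<inter> A)"
    and "G X = (d00 * u + d01 * v) * f1 (X \<inter> A) + (d10 * u + d11 * v) * g1 (X \<inter> A)"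
    if "X - A = B - A" for X
    unfolding F_def G_def u_def v_def by (rule split_comb_fix_right[OF that])+
  moreover have "insert i B \<inter> A = insert i (B \<inter> A)" "insert i B - A = B - A"
    using assms(3) by auto
  moreover have "f1 (insert i (B \<inter> A)) * g1 (B \<inter> A) \<le> f1 (B \<inter> A) * g1 (insert i (B \<inter> A))"
    using assms(1) unfolding ratio_antimono_def by blast
  ultimately show ?thesis
    using ratio_ineq_lincomb by simp
qed

lemma neg_corr_pair_split_comb:
  assumes "neg_corr_pair f1 g1" "neg_corr_pair f2 g2"
    and "0 \<le> c00" "0 \<le> c01" "0 \<le> c10" "0 \<le> c11" "0 \<le> d00" "0 \<le> d01" "0 \<le> d10" "0 \<le> d11"
    and "\<And>a b. 0 \<le> a \<Longrightarrow> 0 \<le> b \<Longrightarrow>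
      (a * c00 + b * d00) * (a * c11 + b * d11) \<le> (a * c01 + b * d01) * (a * c10 + b * d10)"
    and "\<And>u v. 0 \<le> u \<Longrightarrow> 0 \<le> v \<Longrightarrow>
      (c10 * u + c11 * v) * (d00 * u + d01 * v) \<le> (c00 * u + c01 * v) * (d10 * u + d11 * v)"
    and "\<And>u v. 0 \<le> u \<Longrightarrow> 0 \<le> v \<Longrightarrow>
      (c01 * u + c11 * v) * (d00 * u + d10 * v) \<le> (c00 * u + c10 * v) * (d01 * u + d11 * v)"
  shows "neg_corr_pair (split_comb A c00 c01 c10 c11 f1 g1 f2 g2) (split_comb A d00 d01 d10 d11 f1 g1 f2 g2)"
proof -
  let ?F = "split_comb A c00 c01 c10 c11 f1 g1 f2 g2" and ?G = "split_comb A d00 d01 d10 d11 f1 g1 f2 g2"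
  have ratio: "ratio_antimono f1 g1" "ratio_antimono f2 g2"
    and nonneg: "\<And>X. 0 \<le> f1 X \<and> 0 \<le> g1 X" "\<And>X. 0 \<le> f2 X \<and> 0 \<le> g2 X"
    using assms(1,2) unfolding neg_corr_pair_def by blast+
  have "0 \<le> ?F X \<and> 0 \<le> ?G X" for X
    using split_comb_nonneg[of f1 g1 f2 g2, OF nonneg] assms(3-10) by simp
  moreover have "ratio_antimono ?F ?G"
    unfolding ratio_antimono_def
  proof (intro allI)
    fix B i
    show "?F (insert i B) * ?G B \<le> ?F B * ?G (insert i B)"
    proof (cases "i \<in> A")
      case True
      from split_comb_ratio_left[OF ratio(1) nonneg(2) True assms(12)]
      show ?thesis .
    next
      case False
      then have "i \<in> - A" by simp
      from split_comb_ratio_left[OF ratio(2) nonneg(1) this assms(13)]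
      show ?thesis by (simp only: split_comb_swap)
    qed
  qed
  moreover have "neg_corr (\<lambda>X. a * ?F X + b * ?G X)" if "0 \<le> a" "0 \<le> b" for a b
    unfolding split_comb_lincomb
    using assms(3-10) that
    by (intro neg_corr_split_comb[OF assms(1,2)] add_nonneg_nonneg mult_nonneg_nonneg assms(11))
  ultimately show ?thesis
    unfolding neg_corr_pair_def by blast
qed

section \<open>Binary-tree pivotal sampling\<close>

fun stored_prob :: "(nat \<Rightarrow> real) \<Rightarrow> btree \<Rightarrow> real" where
  "stored_prob q (Leaf i) = q i"
| "stored_prob q (Node l r) =
     (if stored_prob q l + stored_prob q r \<le> 1 then stored_prob q l + stored_prob q r
      else stored_prob q l + stored_prob q r - 1)"

definition out_root_set :: "nat set \<times> nat \<times> real \<Rightarrow> nat set" where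
  "out_root_set x = insert (fst (snd x)) (fst x)"

lemma set_pmf_pivot:
  assumes "x \<in> set_pmf (pivot q t)"
  shows "out_root_set x \<subseteq> set (leaves t) \<and> snd (snd x) = stored_prob q t"
  using assms
proof (induction t arbitrary: x)
  case (Leaf i) then show ?case by (simp add: out_root_set_def)
next
  case (Node l r)
  from Node.prems obtain x1 x2 where x1: "x1 \<in> set_pmf (pivot q l)" and x2: "x2 \<in> set_pmf (pivot q r)"
    and x: "x \<in> set_pmf (merge_step (fst x1 \<union> fst x2) (fst (snd x1)) (snd (snd x1)) (fst (snd x2)) (snd (snd x2)))"
    by (auto simp: case_prod_beta)
  show ?case
    using Node.IH(1)[OF x1] Node.IH(2)[OF x2] x
    by (auto simp: merge_step_def out_root_set_def split: if_splits)
qed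

lemma pivot_Node_pair:
  "pivot q (Node l r) = bind_pmf (pair_pmf (pivot q l) (pivot q r)) (\<lambda>(x, y).
     merge_step (fst x \<union> fst y) (fst (snd x)) (stored_prob q l) (fst (snd y)) (stored_prob q r))"
proof -
  have "pivot q (Node l r) = bind_pmf (pair_pmf (pivot q l) (pivot q r)) (\<lambda>(x, y).
     merge_step (fst x \<union> fst y) (fst (snd x)) (snd (snd x)) (fst (snd y)) (snd (snd y)))"
    by (simp add: pair_pmf_def bind_assoc_pmf bind_return_pmf case_prod_unfold)
  also have "\<dots> = bind_pmf (pair_pmf (pivot q l) (pivot q r)) (\<lambda>(x, y).
     merge_step (fst x \<union> fst y) (fst (snd x)) (stored_prob q l) (fst (snd y)) (stored_prob q r))"
    by (rule bind_pmf_cong) (auto dest!: set_pmf_pivot)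
  finally show ?thesis .
qed

lemma measure_pair_pivot:
  assumes "distinct (leaves (Node l r))" and "\<And>x. P x \<subseteq> out_root_set x" "\<And>y. Q y \<subseteq> out_root_set y"
  shows "measure_pmf.prob (pair_pmf (pivot q l) (pivot q r)) {z. X \<subseteq> P (fst z) \<union> Q (snd z)}
     = measure_pmf.prob (pivot q l) {x. X \<inter> set (leaves l) \<subseteq> P x}
       * measure_pmf.prob (pivot q r) {y. X - set (leaves l) \<subseteq> Q y}"
proof (rule measure_pair_pmf_subset_Un)
  show "P x \<subseteq> set (leaves l)" if "x \<in> set_pmf (pivot q l)" for x
    using set_pmf_pivot[OF that] assms(2)[of x] by blast
  show "Q y \<inter> set (leaves l) = {}" if "y \<in> set_pmf (pivot q r)" for y
    using set_pmf_pivot[OF that] assms(1) assms(3)[of y] by auto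
qed

definition out_prob :: "(nat \<Rightarrow> real) \<Rightarrow> btree \<Rightarrow> nat set \<Rightarrow> real" where
  "out_prob q t X = measure_pmf.prob (pivot q t) {x. X \<subseteq> fst x}"

definition out_root_prob :: "(nat \<Rightarrow> real) \<Rightarrow> btree \<Rightarrow> nat set \<Rightarrow> real" where
  "out_root_prob q t X = measure_pmf.prob (pivot q t) {x. X \<subseteq> out_root_set x}"

lemma out_probs_Node_le:
  assumes "distinct (leaves (Node l r))" "stored_prob q l + stored_prob q r \<le> 1"
  defines "L \<equiv> set (leaves l)"
    and "p \<equiv> pmf (bernoulli_pmf (stored_prob q l / (stored_prob q l + stored_prob q r))) True"
  shows "out_prob q (Node l r) X = out_prob q l (X \<inter> L) * out_prob q r (X - L)"
    and "out_root_prob q (Node l r) X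
       = p * out_root_prob q l (X \<inter> L) * out_prob q r (X - L)
       + (1 - p) * out_prob q l (X \<inter> L) * out_root_prob q r (X - L)"
proof -
  have fst_out_root_set: "fst x \<subseteq> out_root_set x" for x
    by (auto simp: out_root_set_def)
  note pair = measure_pair_pivot[OF assms(1), of _ _ q X, folded L_def]
  note node = merge_step_def assms(2) case_prod_unfold measure_bind_map_pmf_bool
  show "out_prob q (Node l r) X = out_prob q l (X \<inter> L) * out_prob q r (X - L)"
    using pair[of fst fst, OF fst_out_root_set fst_out_root_set]
    unfolding out_prob_def pivot_Node_pair by (simp add: node left_diff_distrib)
  show "out_root_prob q (Node l r) X
       = p * out_root_prob q l (X \<inter> L) * out_prob q r (X - L)
       + (1 - p) * out_prob q l (X \<inter> L) * out_root_prob q r (X - L)"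
    using pair[of out_root_set fst, OF order_refl fst_out_root_set]
      pair[of fst out_root_set, OF fst_out_root_set order_refl]
    unfolding out_prob_def out_root_prob_def pivot_Node_pair by (simp add: node p_def out_root_set_def)
qed

lemma out_probs_Node_gt:
  assumes "distinct (leaves (Node l r))" "\<not> stored_prob q l + stored_prob q r \<le> 1"
  defines "L \<equiv> set (leaves l)"
    and "p \<equiv> pmf (bernoulli_pmf ((1 - stored_prob q l) / (2 - stored_prob q l - stored_prob q r))) True"
  shows "out_prob q (Node l r) X
       = p * out_prob q l (X \<inter> L) * out_root_prob q r (X - L)
       + (1 - p) * out_root_prob q l (X \<inter> L) * out_prob q r (X - L)"
    and "out_root_prob q (Node l r) X = out_root_prob q l (X \<inter> L) * out_root_prob q r (X - L)"
proof -
  have fst_out_root_set: "fst x \<subseteq> out_root_set x" for x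
    by (auto simp: out_root_set_def)
  note pair = measure_pair_pivot[OF assms(1), of _ _ q X, folded L_def]
  note node = merge_step_def assms(2) case_prod_unfold measure_bind_map_pmf_bool
  show "out_prob q (Node l r) X
       = p * out_prob q l (X \<inter> L) * out_root_prob q r (X - L)
       + (1 - p) * out_root_prob q l (X \<inter> L) * out_prob q r (X - L)"
    using pair[of out_root_set fst, OF order_refl fst_out_root_set]
      pair[of fst out_root_set, OF fst_out_root_set order_refl]
    unfolding out_prob_def out_root_prob_def pivot_Node_pair by (simp add: node p_def out_root_set_def)
  show "out_root_prob q (Node l r) X = out_root_prob q l (X \<inter> L) * out_root_prob q r (X - L)"
    using pair[of out_root_set out_root_set, OF order_refl order_refl]
    unfolding out_root_prob_def pivot_Node_pair by (simp add: node out_root_set_def insert_commute left_diff_distrib)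
qed

lemma neg_corr_pair_out_probs:
  assumes "distinct (leaves t)"
  shows "neg_corr_pair (out_prob q t) (out_root_prob q t)"
  using assms
proof (induction t)
  case (Leaf m)
  have "out_prob q (Leaf m) X = (if X = {} then 1 else 0)"
    and "out_root_prob q (Leaf m) X = (if X \<subseteq> {m} then 1 else 0)" for X
    by (simp_all add: out_prob_def out_root_prob_def out_root_set_def)
  then show ?case
    unfolding neg_corr_pair_def ratio_antimono_def neg_corr_def by auto
next
  case (Node l r)
  let ?comb = "\<lambda>c00 c01 c10 c11. split_comb (set (leaves l)) c00 c01 c10 c11
    (out_prob q l) (out_root_prob q l) (out_prob q r) (out_root_prob q r)"
  have IH: "neg_corr_pair (out_prob q l) (out_root_prob q l)" "neg_corr_pair (out_prob q r) (out_root_prob q r)"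
    using Node by simp_all
  show ?case
  proof (cases "stored_prob q l + stored_prob q r \<le> 1")
    case True
    define p where "p = pmf (bernoulli_pmf (stored_prob q l / (stored_prob q l + stored_prob q r))) True"
    have p: "0 \<le> p" "p \<le> 1"
      by (simp_all add: p_def pmf_le_1)
    have "out_prob q (Node l r) = ?comb 1 0 0 0" "out_root_prob q (Node l r) = ?comb 0 (1 - p) p 0"
      by (simp_all add: fun_eq_iff split_comb_def out_probs_Node_le[OF Node.prems True] p_def algebra_simps)
    then show ?thesis
      by (simp only:) (rule neg_corr_pair_split_comb[OF IH]; use p in \<open>auto intro: mult_nonneg_nonneg\<close>)
  next
    case False
    define p where "p = pmf (bernoulli_pmf ((1 - stored_prob q l) / (2 - stored_prob q l - stored_prob q r))) True"
    have p: "0 \<le> p" "p \<le> 1"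
      by (simp_all add: p_def pmf_le_1)
    have "out_prob q (Node l r) = ?comb 0 p (1 - p) 0" "out_root_prob q (Node l r) = ?comb 0 0 0 1"
      by (simp_all add: fun_eq_iff split_comb_def out_probs_Node_gt[OF Node.prems False] p_def algebra_simps)
    then show ?thesis
      by (simp only:) (rule neg_corr_pair_split_comb[OF IH]; use p in \<open>auto intro: mult_nonneg_nonneg\<close>)
  qed
qed

lemma measure_pivotal_sampling_superset:
  "measure_pmf.prob (pivotal_sampling q t) {T. X \<subseteq> T}
   = (if stored_prob q t = 1 then out_root_prob q t X else out_prob q t X)"
proof -
  have same: "X \<subseteq> (case x of (S, i, a) \<Rightarrow> if a = 1 then insert i S else S)
    \<longleftrightarrow> X \<subseteq> (if stored_prob q t = 1 then out_root_set x else fst x)"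
    if "x \<in> set_pmf (pivot q t)" for x
    using set_pmf_pivot[OF that] by (auto simp: out_root_set_def split: prod.split)
  have "measure_pmf.prob (pivot q t) {x. X \<subseteq> (case x of (S, i, a) \<Rightarrow> if a = 1 then insert i S else S)}
     = measure_pmf.prob (pivot q t) {x. X \<subseteq> (if stored_prob q t = 1 then out_root_set x else fst x)}"
    by (intro measure_pmf.finite_measure_eq_AE) (simp_all add: AE_measure_pmf_iff same)
  then show ?thesis
    by (simp add: pivotal_sampling_def out_prob_def out_root_prob_def vimage_def)
qed

lemma neg_corr_pivotal_sampling:
  assumes "distinct (leaves t)"
  shows "neg_corr (\<lambda>X. measure_pmf.prob (pivotal_sampling q t) {T. X \<subseteq> T})"
  using neg_corr_pairD[OF neg_corr_pair_out_probs[OF assms]]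
  by (cases "stored_prob q t = 1") (simp_all add: measure_pivotal_sampling_superset)

theorem corollaryE3:
  fixes t :: btree and n :: nat and q :: "nat \<Rightarrow> real"
    and S :: "nat set" and i j :: nat
  assumes leaves_t: "distinct (leaves t)" "set (leaves t) = {1..n}"
    and q_range: "\<And>l. l \<in> {1..n} \<Longrightarrow> 0 \<le> q l \<and> q l \<le> 1"
    and q_int: "(\<Sum>l\<in>{1..n}. q l) \<in> \<int>"
    and S_sub: "S \<subseteq> {1..n}"
    and pos: "measure_pmf.prob (pivotal_sampling q t) {T. S \<subseteq> T} > 0"
    and ij: "i \<in> {1..n} - S" "j \<in> {1..n} - S" "i \<noteq> j"
  shows "(measure_pmf.prob (pivotal_sampling q t) {T. S \<subseteq> T \<and> i \<in> T}
            / measure_pmf.prob (pivotal_sampling q t) {T. S \<subseteq> T})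
       * (measure_pmf.prob (pivotal_sampling q t) {T. S \<subseteq> T \<and> j \<in> T}
            / measure_pmf.prob (pivotal_sampling q t) {T. S \<subseteq> T})
       \<ge> measure_pmf.prob (pivotal_sampling q t) {T. S \<subseteq> T \<and> i \<in> T \<and> j \<in> T}
            / measure_pmf.prob (pivotal_sampling q t) {T. S \<subseteq> T}"
proof -
  define P where "P X = measure_pmf.prob (pivotal_sampling q t) {T. X \<subseteq> T}" for X
  have "P S > 0"
    using pos unfolding P_def .
  have "P (insert i (insert j S)) * P S \<le> P (insert i S) * P (insert j S)"
    using neg_corr_pivotal_sampling[OF leaves_t(1)] ij(3) unfolding neg_corr_def P_def by blast
  then have "P (insert i (insert j S)) * P S / (P S * P S) \<le> P (insert i S) * P (insert j S) / (P S * P S)"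
    by (rule divide_right_mono) simp
  then have "P (insert i (insert j S)) / P S \<le> P (insert i S) / P S * (P (insert j S) / P S)"
    using \<open>P S > 0\<close> by simp
  moreover have "{T. S \<subseteq> T \<and> i \<in> T} = {T. insert i S \<subseteq> T}" "{T. S \<subseteq> T \<and> j \<in> T} = {T. insert j S \<subseteq> T}"
    "{T. S \<subseteq> T \<and> i \<in> T \<and> j \<in> T} = {T. insert i (insert j S) \<subseteq> T}"
    by auto
  ultimately show ?thesis
    unfolding P_def by (simp only:)
qed

end
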